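(* Let $f\in\mathbb{C}[h]$ and let $V$ be a simple $\mathcal{H}(f)$-module with $\dim V=n<\infty$. If $x^nV\neq 0$, then $V\cong A'_{\mathcal{H}(f)}(\lambda,\dot z,a)$ for some $\dot z\in\mathbb{C}$, $a\in\mathbb{C}^*$ and $\lambda\in S_f$ with $|\lambda|=n$.
   Context: For $f(h)\in\mathbb{C}[h]$, $\mathcal{H}(f)$ is the unital associative $\mathbb{C}$-algebra generated by $x,y,h$ with relations $hx=xf(h)$, $yh=f(h)y$, $yx-xy=f(h)-h$. $S_f$ is the set of maps $\lambda:\mathbb{Z}\to\mathbb{C}$ with $f(\lambda(i))=\lambda(i+1)$ for all $i$; $|\lambda|$ is the nonnegative generator of the subgroup $\{m\in\mathbb{Z}\mid\lambda(i+m)=\lambda(i)\ \forall i\}$. For $\lambda\in S_f$ with $|\lambda|=m\neq0$, $\dot z\in\mathbb{C}$, $a\in\mathbb{C}^*$: $A'_{\mathcal{H}(f)}(\lambda,\dot z,a)$ is the quotient of $\mathbb{C}[t,t^{-1}]$ by $\mathbb{C}[t,t^{-1}](t^m-a)$, with $\mathcal{H}(f)$-action induced by $ht^i=\lambda(i)t^i$, $xt^i=t^{i+1}$, $yt^i=(\lambda(i)+\dot z)t^{i-1}$ ($i\in\mathbb{Z}$). *)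

theory Defs
  imports "HOL-Computational_Algebra.Polynomial" "Jordan_Normal_Form.Matrix"
begin

definition poly_mat :: "nat \<Rightarrow> complex poly \<Rightarrow> complex mat \<Rightarrow> complex mat" where
  "poly_mat n f A = foldr (\<lambda>c M. c \<cdot>\<^sub>m 1\<^sub>m n + A * M) (coeffs f) (0\<^sub>m n n)"

definition Hf_module :: "complex poly \<Rightarrow> nat \<Rightarrow> complex mat \<Rightarrow> complex mat \<Rightarrow> complex mat \<Rightarrow> bool" where
  "Hf_module f n X Y H \<longleftrightarrow>
     X \<in> carrier_mat n n \<and> Y \<in> carrier_mat n n \<and> H \<in> carrier_mat n n \<and>
     H * X = X * poly_mat n f H \<and>
     Y * H = poly_mat n f H * Y \<and>
     Y * X - X * Y = poly_mat n f H - H"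

definition Hf_submodule :: "nat \<Rightarrow> complex mat \<Rightarrow> complex mat \<Rightarrow> complex mat \<Rightarrow> complex vec set \<Rightarrow> bool" where
  "Hf_submodule n X Y H W \<longleftrightarrow>
     W \<subseteq> carrier_vec n \<and> 0\<^sub>v n \<in> W \<and>
     (\<forall>v\<in>W. \<forall>w\<in>W. v + w \<in> W) \<and> (\<forall>c. \<forall>v\<in>W. c \<cdot>\<^sub>v v \<in> W) \<and>
     (\<forall>v\<in>W. X *\<^sub>v v \<in> W \<and> Y *\<^sub>v v \<in> W \<and> H *\<^sub>v v \<in> W)"

definition Hf_simple :: "complex poly \<Rightarrow> nat \<Rightarrow> complex mat \<Rightarrow> complex mat \<Rightarrow> complex mat \<Rightarrow> bool" where
  "Hf_simple f n X Y H \<longleftrightarrow> Hf_module f n X Y H \<and> n \<noteq> 0 \<and>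
     (\<forall>W. Hf_submodule n X Y H W \<longrightarrow> W = {0\<^sub>v n} \<or> W = carrier_vec n)"

definition Hf_iso :: "nat \<Rightarrow> complex mat \<Rightarrow> complex mat \<Rightarrow> complex mat \<Rightarrow>
                      complex mat \<Rightarrow> complex mat \<Rightarrow> complex mat \<Rightarrow> bool" where
  "Hf_iso n X Y H X' Y' H' \<longleftrightarrow>
     (\<exists>P \<in> carrier_mat n n. invertible_mat P \<and>
        P * X = X' * P \<and> P * Y = Y' * P \<and> P * H = H' * P)"

definition S_f :: "complex poly \<Rightarrow> (int \<Rightarrow> complex) set" where
  "S_f f = {lam. \<forall>i. poly f (lam i) = lam (i + 1)}"

definition lam_period :: "(int \<Rightarrow> complex) \<Rightarrow> nat" where
  "lam_period lam = (THE g::nat. {m::int. \<forall>i. lam (i + m) = lam i} = range (\<lambda>k::int. k * int g))"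

text \<open>The quotient C[t,t^-1]/(t^m - a) has basis t^0,...,t^(m-1), identified with the
  unit vectors of C^m; the class of t^i (i in Z) is a^(i div m) t^(i mod m).\<close>
definition tpow :: "nat \<Rightarrow> complex \<Rightarrow> int \<Rightarrow> complex vec" where
  "tpow m a i = (a powi (i div int m)) \<cdot>\<^sub>v unit_vec m (nat (i mod int m))"

text \<open>Matrices (w.r.t. the basis t^0..t^(m-1)) of the actions of x, y, h on
  A'(lambda, zdot, a): x t^i = t^(i+1), y t^i = (lambda i + zdot) t^(i-1), h t^i = lambda i t^i.\<close>
definition A'_X :: "nat \<Rightarrow> complex \<Rightarrow> complex mat" where
  "A'_X m a = mat m m (\<lambda>(r, j). tpow m a (int j + 1) $ r)"

definition A'_Y :: "(int \<Rightarrow> complex) \<Rightarrow> complex \<Rightarrow> nat \<Rightarrow> complex \<Rightarrow> complex mat" where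
  "A'_Y lam zd m a = mat m m (\<lambda>(r, j). ((lam (int j) + zd) \<cdot>\<^sub>v tpow m a (int j - 1)) $ r)"

definition A'_H :: "(int \<Rightarrow> complex) \<Rightarrow> nat \<Rightarrow> complex \<Rightarrow> complex mat" where
  "A'_H lam m a = mat m m (\<lambda>(r, j). (lam (int j) \<cdot>\<^sub>v tpow m a (int j)) $ r)"

end

theory Submission
  imports Defs "Jordan_Normal_Form.Schur_Decomposition" "Jordan_Normal_Form.Spectral_Radius"
begin

text \<open>
  The element XY - H commutes with X, Y and H, so by Schur's lemma XY = H + z and YX = f(H) + z
  for a scalar z. The images of the powers of X stabilise, so im X^n = im X^(n+1), which makes
  im X^n a submodule; as X^n \<noteq> 0 it is everything and X is injective. Since X maps an
  eigenvector of H with eigenvalue \<mu> to one with eigenvalue f(\<mu>), the f-orbit of an eigenvalue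
  is finite and reaches a periodic point \<mu> of some period p \<le> n. X^p preserves the
  \<mu>-eigenspace of H, giving v with Hv = \<mu>v and X^p v = av, a \<noteq> 0. On v, Xv, ..., X^(p-1)v the
  operators act by the matrices of A'(\<lambda>, z, a) with \<lambda>(i) = f^(i mod p)(\<mu>), so these vectors span
  a nonzero submodule, hence everything; thus p = n and V is isomorphic to A'(\<lambda>, z, a).
\<close>

lemma mat_eq_by_mult_vec:
  fixes A B :: "'a::comm_ring_1 mat"
  assumes A: "A \<in> carrier_mat nr nc" and B: "B \<in> carrier_mat nr nc"
    and eq: "\<And>v. v \<in> carrier_vec nc \<Longrightarrow> A *\<^sub>v v = B *\<^sub>v v"
  shows "A = B"
proof (rule eq_matI)
  fix i j assume i: "i < dim_row B" and j: "j < dim_col B"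
  have "(A *\<^sub>v unit_vec nc j) $ i = (B *\<^sub>v unit_vec nc j) $ i" by (simp add: eq)
  thus "A $$ (i, j) = B $$ (i, j)" using A B i j by simp
qed (use A B in auto)

lemma mult_unit_vec_eq_col:
  fixes A :: "'a::semiring_1 mat"
  assumes A: "A \<in> carrier_mat nr nc" and j: "j < nc"
  shows "A *\<^sub>v unit_vec nc j = col A j"
  by (rule eq_vecI) (use A j scalar_prod_right_unit in auto)

lemma zero_mat_mult_vec: "v \<in> carrier_vec m \<Longrightarrow> 0\<^sub>m n m *\<^sub>v v = (0\<^sub>v n :: 'a::comm_ring_1 vec)"
  by (intro eq_vecI) (auto simp: scalar_prod_def)

lemma mult_zero_vec: "A \<in> carrier_mat n m \<Longrightarrow> A *\<^sub>v 0\<^sub>v m = (0\<^sub>v n :: 'a::comm_ring_1 vec)"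
  by (intro eq_vecI) (auto simp: scalar_prod_def)

lemma smult_mat_mult_vec:
  "A \<in> carrier_mat nr nc \<Longrightarrow> v \<in> carrier_vec nc \<Longrightarrow> (a \<cdot>\<^sub>m A) *\<^sub>v v = a \<cdot>\<^sub>v (A *\<^sub>v (v :: 'a::comm_ring_1 vec))"
  by (intro eq_vecI) (auto simp: scalar_prod_def sum_distrib_left ac_simps)

lemma smult_one_mat_mult_vec:
  "v \<in> carrier_vec n \<Longrightarrow> (a \<cdot>\<^sub>m 1\<^sub>m n) *\<^sub>v v = a \<cdot>\<^sub>v (v :: 'a::comm_ring_1 vec)"
  by (simp add: smult_mat_mult_vec[of _ n n])

lemma mult_vec_intertwine:
  fixes A B C :: "'a::comm_ring_1 mat"
  assumes "A \<in> carrier_mat n n" "B \<in> carrier_mat m m" "C \<in> carrier_mat n m"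
    and "A * C = C * B" and "w \<in> carrier_vec m"
  shows "A *\<^sub>v (C *\<^sub>v w) = C *\<^sub>v (B *\<^sub>v w)"
  using assms by (metis assoc_mult_mat_vec)

lemma intertwine_inverse:
  fixes A B Q R :: "'a::comm_ring_1 mat"
  assumes A: "A \<in> carrier_mat n n" and B: "B \<in> carrier_mat n n" and Q: "Q \<in> carrier_mat n n"
    and R: "R \<in> carrier_mat n n" and QR: "Q * R = 1\<^sub>m n" and RQ: "R * Q = 1\<^sub>m n"
    and AQ: "A * Q = Q * B"
  shows "R * A = B * R"
proof -
  have "R * A = R * A * (Q * R)" using A R QR by simp
  also have "\<dots> = R * (A * Q) * R" using A Q R by (simp add: assoc_mult_mat[of _ n n _ n _ n])
  also have "\<dots> = (R * Q) * B * R" using B Q R AQ by (simp add: assoc_mult_mat[of _ n n _ n _ n])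
  finally show ?thesis using B R RQ by simp
qed

lemma surj_mat_right_inverse:
  fixes C :: "'a::comm_ring_1 mat"
  assumes C: "C \<in> carrier_mat n m"
    and surj: "\<And>v. v \<in> carrier_vec n \<Longrightarrow> \<exists>w \<in> carrier_vec m. C *\<^sub>v w = v"
  shows "\<exists>R \<in> carrier_mat m n. C * R = 1\<^sub>m n"
proof -
  define w where "w j = (SOME w. w \<in> carrier_vec m \<and> C *\<^sub>v w = unit_vec n j)" for j
  have w: "w j \<in> carrier_vec m" "C *\<^sub>v w j = unit_vec n j" if "j < n" for j
    using someI_ex[of "\<lambda>w. w \<in> carrier_vec m \<and> C *\<^sub>v w = unit_vec n j"] surj[of "unit_vec n j"]
    unfolding w_def by auto
  define R where "R = mat m n (\<lambda>(i, j). w j $ i)"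
  have R: "R \<in> carrier_mat m n" unfolding R_def by simp
  have "col R j = w j" if "j < n" for j
    unfolding R_def using that w(1)[OF that] by (intro eq_vecI) auto
  hence "C * R = 1\<^sub>m n"
    using C R w by (intro mat_col_eqI) (auto simp: col_mult2[OF C R])
  with R show ?thesis by blast
qed

text \<open>Pad Q with zero columns and R with zero rows: if m < n, the padded Q is singular
  while its product with the padded R is still the identity.\<close>
lemma mat_right_inverse_dim_le:
  fixes Q R :: "'a::field mat"
  assumes Q: "Q \<in> carrier_mat n m" and R: "R \<in> carrier_mat m n" and QR: "Q * R = 1\<^sub>m n"
  shows "n \<le> m"
proof (rule ccontr)
  assume "\<not> n \<le> m"
  hence mn: "m < n" by simp
  define Q' where "Q' = mat n n (\<lambda>(r, i). if i < m then Q $$ (r, i) else 0)"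
  define R' where "R' = mat n n (\<lambda>(i, r). if i < m then R $$ (i, r) else 0)"
  have Q': "Q' \<in> carrier_mat n n" and R': "R' \<in> carrier_mat n n" unfolding Q'_def R'_def by auto
  have "Q' * R' = Q * R"
  proof (rule eq_matI)
    fix r s assume "r < dim_row (Q * R)" "s < dim_col (Q * R)"
    hence r: "r < n" and s: "s < n" using Q R by auto
    have "(Q' * R') $$ (r, s) = (\<Sum>k<n. (if k < m then Q $$ (r, k) * R $$ (k, s) else 0))"
      using r s unfolding Q'_def R'_def by (auto simp: scalar_prod_def atLeast0LessThan intro: sum.cong)
    also have "\<dots> = (\<Sum>k<m. Q $$ (r, k) * R $$ (k, s))"
      using mn by (intro sum.mono_neutral_cong_right) auto
    also have "\<dots> = (Q * R) $$ (r, s)"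
      using r s Q R by (simp add: scalar_prod_def atLeast0LessThan)
    finally show "(Q' * R') $$ (r, s) = (Q * R) $$ (r, s)" .
  qed (use Q R Q' R' in auto)
  hence "det Q' * det R' = 1" using det_mult[OF Q' R'] QR by simp
  moreover have "Q' *\<^sub>v unit_vec n (n - 1) = 0\<^sub>v n"
    using mult_unit_vec_eq_col[OF Q', of "n - 1"] mn unfolding Q'_def by (auto intro!: eq_vecI)
  hence "det Q' = 0"
    using mn by (subst det_0_iff_vec_prod_zero[OF Q']) (auto intro!: exI[of _ "unit_vec n (n - 1)"])
  ultimately show False by simp
qed

lemma pow_mat_mult_vec_add:
  assumes A: "A \<in> carrier_mat n n" and v: "v \<in> carrier_vec n"
  shows "A ^\<^sub>m a *\<^sub>v (A ^\<^sub>m b *\<^sub>v v) = A ^\<^sub>m (a + b) *\<^sub>v (v :: 'a::comm_ring_1 vec)"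
  using v
proof (induction b arbitrary: v)
  case (Suc b)
  have "A ^\<^sub>m a *\<^sub>v (A ^\<^sub>m Suc b *\<^sub>v v) = A ^\<^sub>m a *\<^sub>v (A ^\<^sub>m b *\<^sub>v (A *\<^sub>v v))"
    using A Suc.prems by (simp add: assoc_mult_mat_vec[of _ n n _ n])
  also have "\<dots> = A ^\<^sub>m (a + b) *\<^sub>v (A *\<^sub>v v)" using A Suc by simp
  finally show ?case using A Suc.prems by (simp add: assoc_mult_mat_vec[of _ n n _ n])
qed (use A in simp)

lemma pow_mat_Suc_mult_vec:
  "A \<in> carrier_mat n n \<Longrightarrow> v \<in> carrier_vec n \<Longrightarrow> A ^\<^sub>m Suc k *\<^sub>v v = A *\<^sub>v (A ^\<^sub>m k *\<^sub>v (v :: 'a::comm_ring_1 vec))"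
  using pow_mat_mult_vec_add[of A n v 1 k] by simp

lemma pow_mat_Suc2_mult_vec:
  "A \<in> carrier_mat n n \<Longrightarrow> v \<in> carrier_vec n \<Longrightarrow> A ^\<^sub>m Suc k *\<^sub>v v = A ^\<^sub>m k *\<^sub>v (A *\<^sub>v (v :: 'a::comm_ring_1 vec))"
  by (simp add: assoc_mult_mat_vec[of _ n n _ n])

section \<open>Cayley--Hamilton and eigenvectors in invariant subspaces\<close>

fun apply_factors :: "'a::comm_ring_1 mat \<Rightarrow> 'a list \<Rightarrow> 'a vec \<Rightarrow> 'a vec" where
  "apply_factors A [] v = v"
| "apply_factors A (r # rs) v = apply_factors A rs (A *\<^sub>v v - r \<cdot>\<^sub>v v)"

lemma apply_factors_append: "apply_factors A (rs @ ss) v = apply_factors A ss (apply_factors A rs v)"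
  by (induction rs arbitrary: v) auto

lemma apply_factors_zeros:
  assumes A: "A \<in> carrier_mat n n" and v: "v \<in> carrier_vec n"
  shows "apply_factors A (replicate k 0) v = A ^\<^sub>m k *\<^sub>v v"
  using v
proof (induction k arbitrary: v)
  case (Suc k)
  have "A *\<^sub>v v - 0 \<cdot>\<^sub>v v = A *\<^sub>v v" using A Suc.prems by (intro eq_vecI) auto
  thus ?case using A Suc by (simp add: pow_mat_Suc2_mult_vec del: pow_mat.simps)
qed (use A in simp)

text \<open>The polynomial identity p(A) = p(0) + A q(A), with q(A) commuting with A.\<close>
lemma apply_factors_const_plus:
  fixes A :: "'a::field mat"
  assumes A: "A \<in> carrier_mat n n"
  obtains M where "M \<in> carrier_mat n n" and "\<And>w. w \<in> carrier_vec n \<Longrightarrow> A *\<^sub>v (M *\<^sub>v w) = M *\<^sub>v (A *\<^sub>v w)"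
    and "\<And>v. v \<in> carrier_vec n \<Longrightarrow> apply_factors A rs v = prod_list (map uminus rs) \<cdot>\<^sub>v v + A *\<^sub>v (M *\<^sub>v v)"
proof (induction rs arbitrary: thesis)
  case Nil
  show ?case
    by (rule Nil[of "0\<^sub>m n n"]) (use A in \<open>auto simp: zero_mat_mult_vec mult_zero_vec[OF A]\<close>)
next
  case (Cons r rs)
  obtain M where M: "M \<in> carrier_mat n n"
    and comm: "\<And>w. w \<in> carrier_vec n \<Longrightarrow> A *\<^sub>v (M *\<^sub>v w) = M *\<^sub>v (A *\<^sub>v w)"
    and IH: "\<And>v. v \<in> carrier_vec n \<Longrightarrow> apply_factors A rs v = prod_list (map uminus rs) \<cdot>\<^sub>v v + A *\<^sub>v (M *\<^sub>v v)"
    using Cons.IH by blast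
  define c where "c = prod_list (map uminus rs)"
  define M' where "M' = c \<cdot>\<^sub>m 1\<^sub>m n + M * (A - r \<cdot>\<^sub>m 1\<^sub>m n)"
  have M': "M' \<in> carrier_mat n n" unfolding M'_def using A M by (intro add_carrier_mat mult_carrier_mat minus_carrier_mat) auto
  have M'v: "M' *\<^sub>v v = c \<cdot>\<^sub>v v + (M *\<^sub>v (A *\<^sub>v v) - r \<cdot>\<^sub>v (M *\<^sub>v v))"
    if v: "v \<in> carrier_vec n" for v
  proof -
    have "M' *\<^sub>v v = (c \<cdot>\<^sub>m 1\<^sub>m n) *\<^sub>v v + M *\<^sub>v ((A - r \<cdot>\<^sub>m 1\<^sub>m n) *\<^sub>v v)"
      unfolding M'_def using A M v
      by (simp add: add_mult_distrib_mat_vec[of _ n n] assoc_mult_mat_vec[of _ n n _ n] minus_carrier_mat)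
    also have "(A - r \<cdot>\<^sub>m 1\<^sub>m n) *\<^sub>v v = A *\<^sub>v v - r \<cdot>\<^sub>v v"
      using A v by (simp add: minus_mult_distrib_mat_vec[of _ n n] smult_one_mat_mult_vec)
    finally show ?thesis
      using A M v by (simp add: mult_minus_distrib_mat_vec[of _ n n] mult_mat_vec smult_one_mat_mult_vec)
  qed
  show ?case
  proof (rule Cons.prems[OF M'])
    fix w :: "'a vec" assume w: "w \<in> carrier_vec n"
    show "A *\<^sub>v (M' *\<^sub>v w) = M' *\<^sub>v (A *\<^sub>v w)"
      using A M w comm
      by (simp add: M'v mult_add_distrib_mat_vec[of _ n n] mult_minus_distrib_mat_vec mult_mat_vec)
  next
    fix v :: "'a vec" assume v: "v \<in> carrier_vec n"
    have "apply_factors A (r # rs) v = c \<cdot>\<^sub>v (A *\<^sub>v v - r \<cdot>\<^sub>v v) + A *\<^sub>v (M *\<^sub>v (A *\<^sub>v v - r \<cdot>\<^sub>v v))"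
      using IH v A unfolding c_def by simp
    also have "\<dots> = (- r * c) \<cdot>\<^sub>v v + A *\<^sub>v (M' *\<^sub>v v)"
      using v A M comm
      by (intro eq_vecI) (auto simp: M'v algebra_simps mult_minus_distrib_mat_vec mult_mat_vec
          mult_add_distrib_mat_vec[of _ n n] simp del: index_mult_mat_vec)
    finally show "apply_factors A (r # rs) v = prod_list (map uminus (r # rs)) \<cdot>\<^sub>v v + A *\<^sub>v (M' *\<^sub>v v)"
      by (simp add: c_def)
  qed
qed

lemma upper_triangular_mult_vec_index:
  fixes T :: "'a::comm_ring_1 mat"
  assumes T: "T \<in> carrier_mat n n" and ut: "upper_triangular T" and v: "v \<in> carrier_vec n"
    and r: "r < n" and zero: "\<And>j. r < j \<Longrightarrow> j < n \<Longrightarrow> v $ j = 0"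
  shows "(T *\<^sub>v v) $ r = T $$ (r, r) * v $ r"
proof -
  have "(T *\<^sub>v v) $ r = (\<Sum>j\<in>{0..<n}. T $$ (r, j) * v $ j)"
    using T v r by (simp add: scalar_prod_def)
  also have "\<dots> = (\<Sum>j\<in>{0..<n}. if j = r then T $$ (r, r) * v $ r else 0)"
    using ut T r zero by (intro sum.cong) (auto simp: upper_triangular_def dest: linorder_neqE_nat)
  finally show ?thesis using r by simp
qed

lemma apply_factors_upper_triangular:
  fixes T :: "'a::comm_ring_1 mat"
  assumes T: "T \<in> carrier_mat n n" and ut: "upper_triangular T"
    and k: "k \<le> n" and v: "v \<in> carrier_vec n" and supp: "\<And>r. k \<le> r \<Longrightarrow> r < n \<Longrightarrow> v $ r = 0"
  shows "apply_factors T (rev (map (\<lambda>i. T $$ (i, i)) [0..<k])) v = 0\<^sub>v n"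
  using k v supp
proof (induction k arbitrary: v)
  case 0
  then show ?case by (intro eq_vecI) auto
next
  case (Suc k)
  define w where "w = T *\<^sub>v v - T $$ (k, k) \<cdot>\<^sub>v v"
  have w: "w \<in> carrier_vec n" using T Suc.prems unfolding w_def by auto
  have "w $ r = 0" if "k \<le> r" "r < n" for r
  proof -
    have "(T *\<^sub>v v) $ r = T $$ (r, r) * v $ r"
      using Suc.prems that by (intro upper_triangular_mult_vec_index[OF T ut]) auto
    then show ?thesis
      using Suc.prems that T unfolding w_def by (cases "r = k") auto
  qed
  then show ?case using Suc.IH[OF _ w] Suc.prems(1) unfolding w_def by simp
qed

lemma apply_factors_similar:
  fixes A B P Q :: "'a::field mat"
  assumes A: "A \<in> carrier_mat n n" and B: "B \<in> carrier_mat n n" and P: "P \<in> carrier_mat n n"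
    and Q: "Q \<in> carrier_mat n n" and AB: "A = P * B * Q" and QP: "Q * P = 1\<^sub>m n"
    and u: "u \<in> carrier_vec n"
  shows "apply_factors A rs (P *\<^sub>v u) = P *\<^sub>v apply_factors B rs u"
  using u
proof (induction rs arbitrary: u)
  case (Cons r rs)
  have "Q *\<^sub>v (P *\<^sub>v u) = u"
    using P Q Cons.prems QP by (metis assoc_mult_mat_vec one_mult_mat_vec)
  hence "A *\<^sub>v (P *\<^sub>v u) = P *\<^sub>v (B *\<^sub>v u)"
    using P B Q Cons.prems unfolding AB by (simp add: assoc_mult_mat_vec[of _ n n _ n])
  hence "A *\<^sub>v (P *\<^sub>v u) - r \<cdot>\<^sub>v (P *\<^sub>v u) = P *\<^sub>v (B *\<^sub>v u - r \<cdot>\<^sub>v u)"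
    using P B Cons.prems by (simp add: mult_minus_distrib_mat_vec mult_mat_vec)
  then show ?case using Cons.IH[of "B *\<^sub>v u - r \<cdot>\<^sub>v u"] B Cons.prems by simp
qed simp

lemma minus_eq_zero_vec_iff:
  "a \<in> carrier_vec n \<Longrightarrow> b \<in> carrier_vec n \<Longrightarrow> a - b = 0\<^sub>v n \<longleftrightarrow> a = (b :: 'a::ab_group_add vec)"
  by (auto simp: vec_eq_iff)

theorem apply_factors_char_poly_roots:
  fixes A :: "complex mat"
  assumes A: "A \<in> carrier_mat n n" and cp: "char_poly A = (\<Prod>e\<leftarrow>es. [:- e, 1:])"
    and v: "v \<in> carrier_vec n"
  shows "apply_factors A (rev es) v = 0\<^sub>v n"
proof -
  obtain B P Q where sd: "schur_decomposition A es = (B, P, Q)"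
    by (cases "schur_decomposition A es") auto
  from schur_decomposition[OF A cp sd] have sim: "similar_mat_wit A B P Q"
    and ut: "upper_triangular B" and diag: "diag_mat B = es" by auto
  from sim A have B: "B \<in> carrier_mat n n" and P: "P \<in> carrier_mat n n" and Q: "Q \<in> carrier_mat n n"
    and QP: "Q * P = 1\<^sub>m n" and PQ: "P * Q = 1\<^sub>m n" and AB: "A = P * B * Q"
    unfolding similar_mat_wit_def Let_def by auto
  have es: "es = map (\<lambda>i. B $$ (i, i)) [0..<n]" using diag B unfolding diag_mat_def by auto
  have Qv: "Q *\<^sub>v v \<in> carrier_vec n" using Q v by simp
  have "v = P *\<^sub>v (Q *\<^sub>v v)" using P Q v PQ by (metis assoc_mult_mat_vec one_mult_mat_vec)
  hence "apply_factors A (rev es) v = P *\<^sub>v apply_factors B (rev es) (Q *\<^sub>v v)"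
    using apply_factors_similar[OF A B P Q AB QP Qv] by metis
  also have "apply_factors B (rev es) (Q *\<^sub>v v) = 0\<^sub>v n"
    unfolding es by (rule apply_factors_upper_triangular[OF B ut le_refl Qv]) auto
  finally show ?thesis using P by (simp add: mult_zero_vec)
qed

lemma invariant_subspace_has_eigenvector:
  fixes A :: "complex mat"
  assumes A: "A \<in> carrier_mat n n" and K: "K \<subseteq> carrier_vec n"
    and inv: "\<And>u r. u \<in> K \<Longrightarrow> A *\<^sub>v u - r \<cdot>\<^sub>v u \<in> K"
    and w: "w \<in> K" "w \<noteq> 0\<^sub>v n"
  obtains u c where "u \<in> K" "u \<noteq> 0\<^sub>v n" "A *\<^sub>v u = c \<cdot>\<^sub>v u"
proof -
  obtain es where cp: "char_poly A = (\<Prod>e\<leftarrow>es. [:- e, 1:])"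
    using char_poly_factorized[OF A] by blast
  have "apply_factors A rs w = 0\<^sub>v n \<Longrightarrow> \<exists>u c. u \<in> K \<and> u \<noteq> 0\<^sub>v n \<and> A *\<^sub>v u = c \<cdot>\<^sub>v u" for rs
    using w
  proof (induction rs arbitrary: w)
    case (Cons r rs)
    show ?case
    proof (cases "A *\<^sub>v w - r \<cdot>\<^sub>v w = 0\<^sub>v n")
      case True
      then have "A *\<^sub>v w = r \<cdot>\<^sub>v w"
        using A K Cons.prems by (auto simp: minus_eq_zero_vec_iff)
      then show ?thesis using Cons.prems by blast
    next
      case False
      then show ?thesis using Cons.IH[of "A *\<^sub>v w - r \<cdot>\<^sub>v w"] Cons.prems inv by auto
    qed
  qed simp
  moreover have "apply_factors A (rev es) w = 0\<^sub>v n"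
    using apply_factors_char_poly_roots[OF A cp] w K by auto
  ultimately show thesis using that by blast
qed

lemma char_poly_factorized_zeros_last:
  fixes A :: "complex mat"
  assumes A: "A \<in> carrier_mat n n"
  obtains es k where "char_poly A = (\<Prod>e\<leftarrow>es @ replicate k 0. [:- e, 1:])" "0 \<notin> set es" "k \<le> n"
proof -
  obtain rs where cp: "char_poly A = (\<Prod>e\<leftarrow>rs. [:- e, 1:])" and len: "length rs = n"
    using char_poly_factorized[OF A] by blast
  define es where "es = filter (\<lambda>e. e \<noteq> 0) rs"
  define k where "k = length (filter (\<lambda>e. e = 0) rs)"
  have "filter (\<lambda>e. e = 0) rs = replicate k 0"
    unfolding k_def by (induction rs) auto
  moreover have "prod_list (map g (filter P xs @ filter (\<lambda>x. \<not> P x) xs)) = prod_list (map g xs)"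
    for g :: "complex \<Rightarrow> complex poly" and P xs by (induction xs) (auto simp: ac_simps)
  ultimately have "char_poly A = (\<Prod>e\<leftarrow>es @ replicate k 0. [:- e, 1:])"
    using cp unfolding es_def by (metis (no_types, lifting) filter_cong not_not)
  moreover have "k \<le> n" unfolding k_def len[symmetric] by simp
  ultimately show thesis using that unfolding es_def by auto
qed

lemma commuting_mult_vec_pow_mat:
  assumes A: "A \<in> carrier_mat n n" and S: "S \<in> carrier_mat n n"
    and comm: "\<And>w. w \<in> carrier_vec n \<Longrightarrow> A *\<^sub>v (S *\<^sub>v w) = S *\<^sub>v (A *\<^sub>v (w :: 'a::comm_ring_1 vec))"
    and w: "w \<in> carrier_vec n"
  shows "S *\<^sub>v (A ^\<^sub>m j *\<^sub>v w) = A ^\<^sub>m j *\<^sub>v (S *\<^sub>v w)"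
  using w
proof (induction j arbitrary: w)
  case (Suc j)
  have "S *\<^sub>v (A ^\<^sub>m Suc j *\<^sub>v w) = S *\<^sub>v (A ^\<^sub>m j *\<^sub>v (A *\<^sub>v w))"
    by (simp only: pow_mat_Suc2_mult_vec[OF A Suc.prems])
  also have "\<dots> = A ^\<^sub>m j *\<^sub>v (A *\<^sub>v (S *\<^sub>v w))"
    using A Suc by (simp add: comm)
  also have "\<dots> = A ^\<^sub>m Suc j *\<^sub>v (S *\<^sub>v w)"
    by (simp only: pow_mat_Suc2_mult_vec[OF A mult_mat_vec_carrier[OF S Suc.prems]])
  finally show ?case .
qed (use A S in simp)

text \<open>A form of Fitting's lemma.\<close>
theorem pow_mat_image_stable:
  fixes A :: "complex mat"
  assumes A: "A \<in> carrier_mat n n"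
  obtains S where "S \<in> carrier_mat n n" and "\<And>v. v \<in> carrier_vec n \<Longrightarrow> A ^\<^sub>m n *\<^sub>v v = A ^\<^sub>m Suc n *\<^sub>v (S *\<^sub>v v)"
proof -
  obtain es k where cp: "char_poly A = (\<Prod>e\<leftarrow>es @ replicate k 0. [:- e, 1:])"
    and es: "0 \<notin> set es" and kn: "k \<le> n"
    using char_poly_factorized_zeros_last[OF A] by metis
  obtain M where M: "M \<in> carrier_mat n n" and comm: "\<And>w. w \<in> carrier_vec n \<Longrightarrow> A *\<^sub>v (M *\<^sub>v w) = M *\<^sub>v (A *\<^sub>v w)"
    and esM: "\<And>v. v \<in> carrier_vec n \<Longrightarrow> apply_factors A (rev es) v = prod_list (map uminus (rev es)) \<cdot>\<^sub>v v + A *\<^sub>v (M *\<^sub>v v)"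
    using apply_factors_const_plus[OF A] by metis
  define c where "c = prod_list (map uminus (rev es))"
  have c: "c \<noteq> 0" unfolding c_def using es by (auto simp: prod_list_zero_iff)
  define S where "S = (- 1 / c) \<cdot>\<^sub>m M"
  have S: "S \<in> carrier_mat n n" unfolding S_def using M by simp
  have S_comm: "A *\<^sub>v (S *\<^sub>v w) = S *\<^sub>v (A *\<^sub>v w)" if "w \<in> carrier_vec n" for w
    using that A M comm unfolding S_def by (simp add: smult_mat_mult_vec[of _ n n] mult_mat_vec)
  show thesis
  proof (rule that[OF S])
    fix v :: "complex vec" assume v: "v \<in> carrier_vec n"
    define u where "u = A ^\<^sub>m k *\<^sub>v v"
    have u: "u \<in> carrier_vec n" unfolding u_def using A v by (simp add: mult_mat_vec_carrier[OF pow_carrier_mat])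
    have "apply_factors A (rev es) u = 0\<^sub>v n"
      using apply_factors_char_poly_roots[OF A cp v] apply_factors_zeros[OF A v, of k]
      unfolding u_def by (simp add: apply_factors_append)
    hence "c \<cdot>\<^sub>v u + A *\<^sub>v (M *\<^sub>v u) = 0\<^sub>v n" using esM[OF u] unfolding c_def by simp
    hence "A *\<^sub>v (M *\<^sub>v u) = (- c) \<cdot>\<^sub>v u"
      using u M A by (auto simp: vec_eq_iff add_eq_0_iff2)
    hence u_eq: "u = A *\<^sub>v (S *\<^sub>v u)"
      using u M c A unfolding S_def by (simp add: smult_mat_mult_vec[of _ n n] mult_mat_vec smult_smult_assoc)
    have "A ^\<^sub>m n *\<^sub>v v = A ^\<^sub>m (n - k) *\<^sub>v u"
      unfolding u_def using A v kn by (simp add: pow_mat_mult_vec_add)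
    also have "\<dots> = A ^\<^sub>m (n - k) *\<^sub>v (A ^\<^sub>m Suc k *\<^sub>v (S *\<^sub>v v))"
      using u_eq commuting_mult_vec_pow_mat[OF A S S_comm v] A S v unfolding u_def
      by (simp add: pow_mat_Suc_mult_vec mult_mat_vec_carrier[OF pow_carrier_mat] del: pow_mat.simps)
    also have "\<dots> = A ^\<^sub>m Suc n *\<^sub>v (S *\<^sub>v v)"
      using A S v kn pow_mat_mult_vec_add[OF A, of "S *\<^sub>v v" "n - k" "Suc k"] by simp
    finally show "A ^\<^sub>m n *\<^sub>v v = A ^\<^sub>m Suc n *\<^sub>v (S *\<^sub>v v)" .
  qed
qed

lemma poly_mat_pCons:
  assumes A: "A \<in> carrier_mat n n"
  shows "poly_mat n (pCons a p) A = a \<cdot>\<^sub>m 1\<^sub>m n + A * poly_mat n p A"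
proof (cases "p = 0 \<and> a = 0")
  case True
  have "a \<cdot>\<^sub>m 1\<^sub>m n + A * poly_mat n p A = 0\<^sub>m n n"
    using True A by (intro eq_matI) (auto simp: poly_mat_def)
  thus ?thesis using True by (simp add: poly_mat_def)
next
  case False
  hence "coeffs (pCons a p) = a # coeffs p" by (auto simp: cCons_def)
  thus ?thesis by (simp add: poly_mat_def)
qed

lemma poly_mat_carrier: "A \<in> carrier_mat n n \<Longrightarrow> poly_mat n p A \<in> carrier_mat n n"
proof (induction p rule: pCons_induct)
  case (pCons a p)
  then show ?case by (simp add: poly_mat_pCons)
qed (simp add: poly_mat_def)

lemma poly_mat_pCons_mult_vec:
  assumes A: "A \<in> carrier_mat n n" and v: "v \<in> carrier_vec n"
  shows "poly_mat n (pCons a p) A *\<^sub>v v = a \<cdot>\<^sub>v v + A *\<^sub>v (poly_mat n p A *\<^sub>v v)"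
  using A v poly_mat_carrier[OF A, of p]
  by (simp add: poly_mat_pCons add_mult_distrib_mat_vec[of _ n n] assoc_mult_mat_vec[of _ n n _ n]
      smult_one_mat_mult_vec)

lemma poly_mat_eigenvector:
  assumes A: "A \<in> carrier_mat n n" and v: "v \<in> carrier_vec n" and Av: "A *\<^sub>v v = \<mu> \<cdot>\<^sub>v v"
  shows "poly_mat n p A *\<^sub>v v = poly p \<mu> \<cdot>\<^sub>v v"
proof (induction p rule: pCons_induct)
  case 0 thus ?case using v by (auto simp: poly_mat_def zero_mat_mult_vec)
next
  case (pCons a p)
  have "poly_mat n (pCons a p) A *\<^sub>v v = a \<cdot>\<^sub>v v + poly p \<mu> \<cdot>\<^sub>v (\<mu> \<cdot>\<^sub>v v)"
    using poly_mat_pCons_mult_vec[OF A v] pCons.IH A v Av by (simp add: mult_mat_vec)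
  also have "\<dots> = poly (pCons a p) \<mu> \<cdot>\<^sub>v v"
    by (rule eq_vecI) (use v in \<open>auto simp: algebra_simps\<close>)
  finally show ?case .
qed

lemma poly_mat_intertwine:
  assumes A: "A \<in> carrier_mat n n" and B: "B \<in> carrier_mat m m" and C: "C \<in> carrier_mat n m"
    and AC: "A * C = C * B" and v: "v \<in> carrier_vec m"
  shows "poly_mat n p A *\<^sub>v (C *\<^sub>v v) = C *\<^sub>v (poly_mat m p B *\<^sub>v v)"
proof (induction p rule: pCons_induct)
  case 0 thus ?case using v C by (auto simp: poly_mat_def zero_mat_mult_vec mult_zero_vec)
next
  case (pCons a p)
  let ?w = "poly_mat m p B *\<^sub>v v"
  have w: "?w \<in> carrier_vec m" using mult_mat_vec_carrier[OF poly_mat_carrier[OF B] v] .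
  have "poly_mat n (pCons a p) A *\<^sub>v (C *\<^sub>v v) = a \<cdot>\<^sub>v (C *\<^sub>v v) + A *\<^sub>v (C *\<^sub>v ?w)"
    using poly_mat_pCons_mult_vec[OF A] C v pCons.IH by simp
  also have "A *\<^sub>v (C *\<^sub>v ?w) = C *\<^sub>v (B *\<^sub>v ?w)"
    using A B C w AC by (metis assoc_mult_mat_vec)
  also have "a \<cdot>\<^sub>v (C *\<^sub>v v) + C *\<^sub>v (B *\<^sub>v ?w) = C *\<^sub>v (a \<cdot>\<^sub>v v + B *\<^sub>v ?w)"
    using C B v w by (simp add: mult_add_distrib_mat_vec[of _ n m] mult_mat_vec)
  also have "\<dots> = C *\<^sub>v (poly_mat m (pCons a p) B *\<^sub>v v)"
    using poly_mat_pCons_mult_vec[OF B v] by simp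
  finally show ?case .
qed

lemma Hf_submodule_image:
  assumes C: "C \<in> carrier_mat n m"
    and X: "\<And>w. w \<in> carrier_vec m \<Longrightarrow> \<exists>w' \<in> carrier_vec m. X *\<^sub>v (C *\<^sub>v w) = C *\<^sub>v w'"
    and Y: "\<And>w. w \<in> carrier_vec m \<Longrightarrow> \<exists>w' \<in> carrier_vec m. Y *\<^sub>v (C *\<^sub>v w) = C *\<^sub>v w'"
    and H: "\<And>w. w \<in> carrier_vec m \<Longrightarrow> \<exists>w' \<in> carrier_vec m. H *\<^sub>v (C *\<^sub>v w) = C *\<^sub>v w'"
  shows "Hf_submodule n X Y H {C *\<^sub>v w | w. w \<in> carrier_vec m}"
  unfolding Hf_submodule_def
proof (intro conjI ballI allI)
  show "{C *\<^sub>v w |w. w \<in> carrier_vec m} \<subseteq> carrier_vec n" using C by auto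
  show "0\<^sub>v n \<in> {C *\<^sub>v w |w. w \<in> carrier_vec m}"
    using mult_zero_vec[OF C] by (intro CollectI exI[of _ "0\<^sub>v m"]) auto
  fix v assume "v \<in> {C *\<^sub>v w |w. w \<in> carrier_vec m}"
  then obtain w where w: "w \<in> carrier_vec m" and v: "v = C *\<^sub>v w" by auto
  {
    fix v' assume "v' \<in> {C *\<^sub>v w |w. w \<in> carrier_vec m}"
    then obtain w' where w': "w' \<in> carrier_vec m" and v': "v' = C *\<^sub>v w'" by auto
    show "v + v' \<in> {C *\<^sub>v w |w. w \<in> carrier_vec m}" unfolding v v' using C w w'
      by (intro CollectI exI[of _ "w + w'"]) (auto simp: mult_add_distrib_mat_vec)
  }
  fix c
  show "c \<cdot>\<^sub>v v \<in> {C *\<^sub>v w |w. w \<in> carrier_vec m}" unfolding v using C w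
    by (intro CollectI exI[of _ "c \<cdot>\<^sub>v w"]) (auto simp: mult_mat_vec)
  show "X *\<^sub>v v \<in> {C *\<^sub>v w |w. w \<in> carrier_vec m}" using X[OF w] unfolding v by blast
  show "Y *\<^sub>v v \<in> {C *\<^sub>v w |w. w \<in> carrier_vec m}" using Y[OF w] unfolding v by blast
  show "H *\<^sub>v v \<in> {C *\<^sub>v w |w. w \<in> carrier_vec m}" using H[OF w] unfolding v by blast
qed

lemma Hf_submodule_eigenspace:
  assumes M: "M \<in> carrier_mat n n"
    and carrier: "X \<in> carrier_mat n n" "Y \<in> carrier_mat n n" "H \<in> carrier_mat n n"
    and X: "\<And>v. v \<in> carrier_vec n \<Longrightarrow> M *\<^sub>v (X *\<^sub>v v) = X *\<^sub>v (M *\<^sub>v v)"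
    and Y: "\<And>v. v \<in> carrier_vec n \<Longrightarrow> M *\<^sub>v (Y *\<^sub>v v) = Y *\<^sub>v (M *\<^sub>v v)"
    and H: "\<And>v. v \<in> carrier_vec n \<Longrightarrow> M *\<^sub>v (H *\<^sub>v v) = H *\<^sub>v (M *\<^sub>v v)"
  shows "Hf_submodule n X Y H {v \<in> carrier_vec n. M *\<^sub>v v = c \<cdot>\<^sub>v v}"
  unfolding Hf_submodule_def
proof (intro conjI ballI allI)
  show "0\<^sub>v n \<in> {v \<in> carrier_vec n. M *\<^sub>v v = c \<cdot>\<^sub>v v}" using mult_zero_vec[OF M] by auto
  fix v assume "v \<in> {v \<in> carrier_vec n. M *\<^sub>v v = c \<cdot>\<^sub>v v}"
  hence v: "v \<in> carrier_vec n" and Mv: "M *\<^sub>v v = c \<cdot>\<^sub>v v" by auto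
  {
    fix v' assume "v' \<in> {v \<in> carrier_vec n. M *\<^sub>v v = c \<cdot>\<^sub>v v}"
    thus "v + v' \<in> {v \<in> carrier_vec n. M *\<^sub>v v = c \<cdot>\<^sub>v v}"
      using v M Mv by (auto simp: mult_add_distrib_mat_vec smult_add_distrib_vec[of _ n])
  }
  fix a
  show "a \<cdot>\<^sub>v v \<in> {v \<in> carrier_vec n. M *\<^sub>v v = c \<cdot>\<^sub>v v}"
    using M v Mv by (auto simp: mult_mat_vec smult_smult_assoc mult.commute)
  show "X *\<^sub>v v \<in> {v \<in> carrier_vec n. M *\<^sub>v v = c \<cdot>\<^sub>v v}"
    using v X Mv carrier by (simp add: mult_mat_vec)
  show "Y *\<^sub>v v \<in> {v \<in> carrier_vec n. M *\<^sub>v v = c \<cdot>\<^sub>v v}"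
    using v Y Mv carrier by (simp add: mult_mat_vec)
  show "H *\<^sub>v v \<in> {v \<in> carrier_vec n. M *\<^sub>v v = c \<cdot>\<^sub>v v}"
    using v H Mv carrier by (simp add: mult_mat_vec)
qed auto

section \<open>Periodic points\<close>

lemma finite_orbit_periodic_point:
  fixes g :: "'a \<Rightarrow> 'a"
  assumes fin: "finite E" and orbit: "\<And>i. (g ^^ i) x \<in> E"
  obtains j p where "0 < p" "p \<le> card E" "(g ^^ p) ((g ^^ j) x) = (g ^^ j) x"
    "\<And>a b. a < b \<Longrightarrow> b < p \<Longrightarrow> (g ^^ a) ((g ^^ j) x) \<noteq> (g ^^ b) ((g ^^ j) x)"
proof -
  define G where "G i = (g ^^ i) x" for i
  have shift: "(g ^^ a) (G b) = G (a + b)" for a b unfolding G_def by (simp add: funpow_add)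
  define P where "P p \<longleftrightarrow> 0 < p \<and> (\<exists>j. G (j + p) = G j)" for p
  have "\<not> inj G"
  proof
    assume "inj G"
    moreover have "finite (range G)" using orbit fin unfolding G_def by (meson finite_subset image_subsetI)
    ultimately show False using finite_imageD by fastforce
  qed
  then obtain i k where "i < k" "G i = G k" unfolding inj_def by (metis linorder_neqE_nat)
  hence "P (k - i)" unfolding P_def by (auto intro!: exI[of _ i])
  define p where "p = (LEAST p. P p)"
  have "P p" unfolding p_def by (rule LeastI) fact
  then obtain j where p: "0 < p" and per: "G (j + p) = G j" unfolding P_def by blast
  have dist: "(g ^^ a) (G j) \<noteq> (g ^^ b) (G j)" if ab: "a < b" "b < p" for a b
  proof
    assume "(g ^^ a) (G j) = (g ^^ b) (G j)"
    hence "P (b - a)" using ab unfolding P_def shift by (auto intro!: exI[of _ "j + a"] simp: ac_simps)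
    moreover have "b - a < p" using ab by simp
    ultimately show False unfolding p_def using not_less_Least by blast
  qed
  have "inj_on (\<lambda>a. (g ^^ a) (G j)) {..<p}"
    unfolding inj_on_def using dist by (metis lessThan_iff nat_neq_iff)
  hence "p = card ((\<lambda>a. (g ^^ a) (G j)) ` {..<p})" by (simp add: card_image)
  also have "\<dots> \<le> card E"
    using orbit fin unfolding shift by (intro card_mono) (auto simp: G_def)
  finally have "p \<le> card E" .
  moreover have "(g ^^ p) (G j) = G j" using per shift[of p j] by (simp add: ac_simps)
  ultimately show thesis using that[of p j] p dist unfolding G_def by simp
qed

section \<open>Simple modules\<close>

locale simple_Hf_module =
  fixes f :: "complex poly" and n :: nat and X Y H :: "complex mat"
  assumes simple: "Hf_simple f n X Y H"
begin

abbreviation F :: "complex mat" where "F \<equiv> poly_mat n f H"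

lemma carrier [simp]: "X \<in> carrier_mat n n" "Y \<in> carrier_mat n n" "H \<in> carrier_mat n n"
  and n_pos: "0 < n"
  using simple unfolding Hf_simple_def Hf_module_def by auto

lemma F_carrier [simp]: "F \<in> carrier_mat n n"
  by (rule poly_mat_carrier) simp

lemma dims [simp]:
  "dim_row X = n" "dim_col X = n" "dim_row Y = n" "dim_col Y = n"
  "dim_row H = n" "dim_col H = n" "dim_row F = n" "dim_col F = n"
  using carrier_matD[OF carrier(1)] carrier_matD[OF carrier(2)] carrier_matD[OF carrier(3)]
    carrier_matD[OF F_carrier] by auto

lemma carrier_closed [simp]:
  fixes A B :: "complex mat"
  assumes "A \<in> carrier_mat n n" "B \<in> carrier_mat n n"
  shows "A * B \<in> carrier_mat n n" "A + B \<in> carrier_mat n n" "A - B \<in> carrier_mat n n"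
  using assms by auto

lemma mult_vec_simps [simp]:
  fixes A B :: "complex mat"
  assumes A: "A \<in> carrier_mat n n" and u: "u \<in> carrier_vec n"
  shows "A *\<^sub>v u \<in> carrier_vec n"
    and "B \<in> carrier_mat n n \<Longrightarrow> (A * B) *\<^sub>v u = A *\<^sub>v (B *\<^sub>v u)"
    and "v \<in> carrier_vec n \<Longrightarrow> A *\<^sub>v (u + v) = A *\<^sub>v u + A *\<^sub>v v"
    and "v \<in> carrier_vec n \<Longrightarrow> A *\<^sub>v (u - v) = A *\<^sub>v u - A *\<^sub>v v"
    and "A *\<^sub>v (c \<cdot>\<^sub>v u) = c \<cdot>\<^sub>v (A *\<^sub>v u)"
  using A u by (auto simp: assoc_mult_mat_vec mult_add_distrib_mat_vec mult_minus_distrib_mat_vec mult_mat_vec)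

lemma relations: "H * X = X * F" "Y * H = F * Y" "Y * X - X * Y = F - H"
  using simple unfolding Hf_simple_def Hf_module_def by auto

lemma submodule_eq_carrier: "Hf_submodule n X Y H W \<Longrightarrow> W \<noteq> {0\<^sub>v n} \<Longrightarrow> W = carrier_vec n"
  using simple unfolding Hf_simple_def by auto

lemma H_X: "v \<in> carrier_vec n \<Longrightarrow> H *\<^sub>v (X *\<^sub>v v) = X *\<^sub>v (F *\<^sub>v v)"
  using relations(1) by (metis assoc_mult_mat_vec carrier(1,3) F_carrier)

lemma Y_H: "v \<in> carrier_vec n \<Longrightarrow> Y *\<^sub>v (H *\<^sub>v v) = F *\<^sub>v (Y *\<^sub>v v)"
  using relations(2) by (metis assoc_mult_mat_vec carrier(2,3) F_carrier)

lemma Y_X_commutator: "v \<in> carrier_vec n \<Longrightarrow> Y *\<^sub>v (X *\<^sub>v v) = X *\<^sub>v (Y *\<^sub>v v) + F *\<^sub>v v - H *\<^sub>v v"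
proof -
  assume v: "v \<in> carrier_vec n"
  have "(Y * X - X * Y) *\<^sub>v v = (F - H) *\<^sub>v v" using relations(3) by simp
  hence "Y *\<^sub>v (X *\<^sub>v v) - X *\<^sub>v (Y *\<^sub>v v) = F *\<^sub>v v - H *\<^sub>v v"
    using v by (simp add: minus_mult_distrib_mat_vec[of _ n n] assoc_mult_mat_vec[of _ n n _ n])
  thus ?thesis using v by (auto simp: vec_eq_iff algebra_simps)
qed

lemma schur_commuting_mat_scalar:
  assumes M: "M \<in> carrier_mat n n"
    and X: "\<And>v. v \<in> carrier_vec n \<Longrightarrow> M *\<^sub>v (X *\<^sub>v v) = X *\<^sub>v (M *\<^sub>v v)"
    and Y: "\<And>v. v \<in> carrier_vec n \<Longrightarrow> M *\<^sub>v (Y *\<^sub>v v) = Y *\<^sub>v (M *\<^sub>v v)"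
    and H: "\<And>v. v \<in> carrier_vec n \<Longrightarrow> M *\<^sub>v (H *\<^sub>v v) = H *\<^sub>v (M *\<^sub>v v)"
  obtains c where "\<And>v. v \<in> carrier_vec n \<Longrightarrow> M *\<^sub>v v = c \<cdot>\<^sub>v v"
proof -
  obtain c where "eigenvalue M c"
    using spectrum_non_empty[OF M n_pos] unfolding spectrum_def by auto
  then obtain u where u: "u \<in> carrier_vec n" "u \<noteq> 0\<^sub>v n" "M *\<^sub>v u = c \<cdot>\<^sub>v u"
    using M unfolding eigenvalue_def eigenvector_def by auto
  have "Hf_submodule n X Y H {v \<in> carrier_vec n. M *\<^sub>v v = c \<cdot>\<^sub>v v}"
    by (rule Hf_submodule_eigenspace[OF M carrier X Y H])
  moreover have "{v \<in> carrier_vec n. M *\<^sub>v v = c \<cdot>\<^sub>v v} \<noteq> {0\<^sub>v n}" using u by auto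
  ultimately have "{v \<in> carrier_vec n. M *\<^sub>v v = c \<cdot>\<^sub>v v} = carrier_vec n"
    by (rule submodule_eq_carrier)
  thus thesis using that by auto
qed

lemma XY_minus_H_scalar: "\<exists>z. \<forall>v \<in> carrier_vec n. X *\<^sub>v (Y *\<^sub>v v) = H *\<^sub>v v + z \<cdot>\<^sub>v v"
proof -
  let ?M = "X * Y - H"
  have M: "?M \<in> carrier_mat n n" by simp
  have Mv: "?M *\<^sub>v v = X *\<^sub>v (Y *\<^sub>v v) - H *\<^sub>v v" if "v \<in> carrier_vec n" for v
    using that by (simp add: minus_mult_distrib_mat_vec[of _ n n] assoc_mult_mat_vec[of _ n n _ n])
  have "?M *\<^sub>v (X *\<^sub>v v) = X *\<^sub>v (?M *\<^sub>v v)" "?M *\<^sub>v (Y *\<^sub>v v) = Y *\<^sub>v (?M *\<^sub>v v)"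
    "?M *\<^sub>v (H *\<^sub>v v) = H *\<^sub>v (?M *\<^sub>v v)" if v: "v \<in> carrier_vec n" for v
    using v by (auto simp: vec_eq_iff Mv H_X Y_H Y_X_commutator algebra_simps simp del: index_mult_mat_vec)
  then obtain z where z: "\<And>v. v \<in> carrier_vec n \<Longrightarrow> ?M *\<^sub>v v = z \<cdot>\<^sub>v v"
    using schur_commuting_mat_scalar[OF M] by metis
  show ?thesis
    using z Mv by (intro exI ballI) (auto simp: vec_eq_iff algebra_simps)
qed

definition z :: complex where
  "z = (SOME z. \<forall>v \<in> carrier_vec n. X *\<^sub>v (Y *\<^sub>v v) = H *\<^sub>v v + z \<cdot>\<^sub>v v)"

lemma X_Y: "v \<in> carrier_vec n \<Longrightarrow> X *\<^sub>v (Y *\<^sub>v v) = H *\<^sub>v v + z \<cdot>\<^sub>v v"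
  using someI_ex[OF XY_minus_H_scalar] unfolding z_def by blast

lemma Y_X: "v \<in> carrier_vec n \<Longrightarrow> Y *\<^sub>v (X *\<^sub>v v) = F *\<^sub>v v + z \<cdot>\<^sub>v v"
  by (auto simp: vec_eq_iff Y_X_commutator X_Y simp del: index_mult_mat_vec)

lemma H_mult_X_pow: "\<exists>B \<in> carrier_mat n n. H * X ^\<^sub>m k = X ^\<^sub>m k * B"
proof (induction k)
  case 0 thus ?case by (intro bexI[of _ H]) auto
next
  case (Suc k)
  then obtain B where B: "B \<in> carrier_mat n n" and HB: "H * X ^\<^sub>m k = X ^\<^sub>m k * B" by auto
  show ?case
  proof (intro bexI[of _ "poly_mat n f B"] mat_eq_by_mult_vec[of _ n n])
    fix v :: "complex vec" assume v: "v \<in> carrier_vec n"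
    have "H * X ^\<^sub>m Suc k *\<^sub>v v = H *\<^sub>v (X *\<^sub>v (X ^\<^sub>m k *\<^sub>v v))"
      using v by (simp add: pow_carrier_mat flip: pow_mat_Suc_mult_vec[OF carrier(1) v] del: pow_mat.simps)
    also have "\<dots> = X *\<^sub>v (F *\<^sub>v (X ^\<^sub>m k *\<^sub>v v))"
      using v by (simp add: H_X pow_carrier_mat)
    also have "F *\<^sub>v (X ^\<^sub>m k *\<^sub>v v) = X ^\<^sub>m k *\<^sub>v (poly_mat n f B *\<^sub>v v)"
      by (rule poly_mat_intertwine[OF carrier(3) B _ HB v]) simp
    also have "X *\<^sub>v (X ^\<^sub>m k *\<^sub>v (poly_mat n f B *\<^sub>v v)) = X ^\<^sub>m Suc k *\<^sub>v (poly_mat n f B *\<^sub>v v)"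
      by (rule pow_mat_Suc_mult_vec[OF carrier(1), symmetric]) (use v poly_mat_carrier[OF B] in simp)
    finally show "H * X ^\<^sub>m Suc k *\<^sub>v v = X ^\<^sub>m Suc k * poly_mat n f B *\<^sub>v v"
      using v poly_mat_carrier[OF B] by (simp add: pow_carrier_mat del: pow_mat.simps)
  qed (use B poly_mat_carrier[OF B] in auto)
qed

text \<open>The image of X^n is stable under Y because it equals the image of X^(n+1), on which
  Y acts through YX = f(H) + z.\<close>
lemma X_pow_image_submodule: "Hf_submodule n X Y H {X ^\<^sub>m n *\<^sub>v w | w. w \<in> carrier_vec n}"
proof -
  obtain S where S: "S \<in> carrier_mat n n"
    and XS: "\<And>v. v \<in> carrier_vec n \<Longrightarrow> X ^\<^sub>m n *\<^sub>v v = X ^\<^sub>m Suc n *\<^sub>v (S *\<^sub>v v)"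
    using pow_mat_image_stable[OF carrier(1)] by metis
  obtain B where B: "B \<in> carrier_mat n n" and HB: "H * X ^\<^sub>m n = X ^\<^sub>m n * B"
    using H_mult_X_pow by blast
  let ?C = "X ^\<^sub>m n"
  show ?thesis
  proof (rule Hf_submodule_image)
    fix w :: "complex vec" assume w: "w \<in> carrier_vec n"
    have Sw: "S *\<^sub>v w \<in> carrier_vec n" using S w by simp
    show "\<exists>w' \<in> carrier_vec n. X *\<^sub>v (?C *\<^sub>v w) = ?C *\<^sub>v w'"
      using w pow_mat_Suc_mult_vec[OF carrier(1) w, of n] pow_mat_Suc2_mult_vec[OF carrier(1) w, of n]
      by (intro bexI[of _ "X *\<^sub>v w"]) simp_all
    show "\<exists>w' \<in> carrier_vec n. H *\<^sub>v (?C *\<^sub>v w) = ?C *\<^sub>v w'"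
      using w B HB by (intro bexI[of _ "B *\<^sub>v w"]) (simp_all flip: mult_vec_simps(2))
    have "Y *\<^sub>v (?C *\<^sub>v w) = Y *\<^sub>v (X *\<^sub>v (?C *\<^sub>v (S *\<^sub>v w)))"
      by (simp only: XS[OF w] pow_mat_Suc_mult_vec[OF carrier(1) Sw])
    also have "\<dots> = F *\<^sub>v (?C *\<^sub>v (S *\<^sub>v w)) + z \<cdot>\<^sub>v (?C *\<^sub>v (S *\<^sub>v w))"
      using Sw Y_X by simp
    also have "F *\<^sub>v (?C *\<^sub>v (S *\<^sub>v w)) = ?C *\<^sub>v (poly_mat n f B *\<^sub>v (S *\<^sub>v w))"
      by (rule poly_mat_intertwine[OF carrier(3) B _ HB Sw]) simp
    finally show "\<exists>w' \<in> carrier_vec n. Y *\<^sub>v (?C *\<^sub>v w) = ?C *\<^sub>v w'"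
      using Sw poly_mat_carrier[OF B]
      by (intro bexI[of _ "poly_mat n f B *\<^sub>v (S *\<^sub>v w) + z \<cdot>\<^sub>v (S *\<^sub>v w)"]) simp_all
  qed simp
qed

lemma X_injective:
  assumes nz: "X ^\<^sub>m n \<noteq> 0\<^sub>m n n" and v: "v \<in> carrier_vec n" and Xv: "X *\<^sub>v v = 0\<^sub>v n"
  shows "v = 0\<^sub>v n"
proof -
  let ?C = "X ^\<^sub>m n"
  have "\<exists>j<n. ?C *\<^sub>v unit_vec n j \<noteq> 0\<^sub>v n"
  proof (rule ccontr)
    assume "\<not> ?thesis"
    hence "?C = 0\<^sub>m n n"
      by (intro mat_col_eqI) (auto simp: mult_unit_vec_eq_col[of _ n n, symmetric])
    thus False using nz by simp
  qed
  hence "{?C *\<^sub>v w | w. w \<in> carrier_vec n} \<noteq> {0\<^sub>v n}"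
    by (metis (mono_tags, lifting) insertI1 mem_Collect_eq singletonD unit_vec_carrier)
  hence surj: "{?C *\<^sub>v w | w. w \<in> carrier_vec n} = carrier_vec n"
    by (rule submodule_eq_carrier[OF X_pow_image_submodule])
  have "\<exists>w \<in> carrier_vec n. ?C *\<^sub>v w = v" if "v \<in> carrier_vec n" for v
  proof -
    have "v \<in> {?C *\<^sub>v w | w. w \<in> carrier_vec n}" using surj that by simp
    thus ?thesis by blast
  qed
  then obtain R where R: "R \<in> carrier_mat n n" and CR: "?C * R = 1\<^sub>m n"
    using surj_mat_right_inverse[of ?C n n] by auto
  have "X * X ^\<^sub>m (n - 1) = ?C"
  proof (rule mat_eq_by_mult_vec[of _ n n])
    fix u :: "complex vec" assume u: "u \<in> carrier_vec n"
    show "X * X ^\<^sub>m (n - 1) *\<^sub>v u = ?C *\<^sub>v u"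
      using n_pos u pow_mat_Suc_mult_vec[OF carrier(1) u, of "n - 1"] by simp
  qed simp_all
  hence "X * (X ^\<^sub>m (n - 1) * R) = 1\<^sub>m n"
    using CR R assoc_mult_mat[of X n n "X ^\<^sub>m (n - 1)" n R n] by simp
  hence "(X ^\<^sub>m (n - 1) * R) * X = 1\<^sub>m n"
    using R by (intro mat_mult_left_right_inverse[of X n]) auto
  hence "v = (X ^\<^sub>m (n - 1) * R) *\<^sub>v (X *\<^sub>v v)"
    using R v by (metis assoc_mult_mat_vec carrier(1) carrier_closed(1) one_mult_mat_vec pow_carrier_mat)
  thus ?thesis using Xv R by (simp add: mult_zero_vec)
qed

lemma X_pow_injective:
  assumes nz: "X ^\<^sub>m n \<noteq> 0\<^sub>m n n" and v: "v \<in> carrier_vec n" "v \<noteq> 0\<^sub>v n"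
  shows "X ^\<^sub>m k *\<^sub>v v \<noteq> 0\<^sub>v n"
  using v
proof (induction k arbitrary: v)
  case (Suc k)
  have "X *\<^sub>v v \<noteq> 0\<^sub>v n" using X_injective[OF nz] Suc.prems by blast
  then show ?case using Suc.IH[of "X *\<^sub>v v"] Suc.prems by (simp only: pow_mat_Suc2_mult_vec[OF carrier(1)]) simp
qed simp

lemma H_eigenvector_X_pow:
  assumes v: "v \<in> carrier_vec n" and Hv: "H *\<^sub>v v = \<mu> \<cdot>\<^sub>v v"
  shows "H *\<^sub>v (X ^\<^sub>m k *\<^sub>v v) = (poly f ^^ k) \<mu> \<cdot>\<^sub>v (X ^\<^sub>m k *\<^sub>v v)"
  using v Hv
proof (induction k arbitrary: v \<mu>)
  case (Suc k)
  have "H *\<^sub>v (X *\<^sub>v v) = poly f \<mu> \<cdot>\<^sub>v (X *\<^sub>v v)"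
    using Suc.prems by (simp add: H_X poly_mat_eigenvector)
  from Suc.IH[OF _ this] Suc.prems show ?case
    by (simp only: pow_mat_Suc2_mult_vec[OF carrier(1)] funpow_Suc_right o_apply mult_vec_simps(1) carrier(1))
qed simp

lemma periodic_eigenpair:
  assumes nz: "X ^\<^sub>m n \<noteq> 0\<^sub>m n n"
  obtains \<mu> p v a where "0 < p" "p \<le> n" "(poly f ^^ p) \<mu> = \<mu>"
    "\<And>i j. i < j \<Longrightarrow> j < p \<Longrightarrow> (poly f ^^ i) \<mu> \<noteq> (poly f ^^ j) \<mu>"
    "v \<in> carrier_vec n" "v \<noteq> 0\<^sub>v n" "H *\<^sub>v v = \<mu> \<cdot>\<^sub>v v" "X ^\<^sub>m p *\<^sub>v v = a \<cdot>\<^sub>v v" "a \<noteq> 0"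
proof -
  obtain \<mu>0 where "eigenvalue H \<mu>0"
    using spectrum_non_empty[OF carrier(3) n_pos] unfolding spectrum_def by auto
  then obtain v0 where v0: "v0 \<in> carrier_vec n" "v0 \<noteq> 0\<^sub>v n" and Hv0: "H *\<^sub>v v0 = \<mu>0 \<cdot>\<^sub>v v0"
    unfolding eigenvalue_def eigenvector_def by auto
  have "(poly f ^^ i) \<mu>0 \<in> spectrum H" for i
    using X_pow_injective[OF nz v0] H_eigenvector_X_pow[OF v0(1) Hv0, of i] v0(1)
    unfolding spectrum_def eigenvalue_def eigenvector_def
    by (auto intro!: exI[of _ "X ^\<^sub>m i *\<^sub>v v0"] simp: pow_carrier_mat)
  then obtain j p where p: "0 < p" "p \<le> card (spectrum H)"
    and per: "(poly f ^^ p) ((poly f ^^ j) \<mu>0) = (poly f ^^ j) \<mu>0"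
    and dist: "\<And>a b. a < b \<Longrightarrow> b < p \<Longrightarrow>
                 (poly f ^^ a) ((poly f ^^ j) \<mu>0) \<noteq> (poly f ^^ b) ((poly f ^^ j) \<mu>0)"
    using finite_orbit_periodic_point[OF card_finite_spectrum(1)[OF carrier(3)]] by metis
  define \<mu> where "\<mu> = (poly f ^^ j) \<mu>0"
  define K where "K = {u \<in> carrier_vec n. H *\<^sub>v u = \<mu> \<cdot>\<^sub>v u}"
  have K: "X ^\<^sub>m p *\<^sub>v u - r \<cdot>\<^sub>v u \<in> K" if u: "u \<in> K" for u r
  proof -
    have u1: "u \<in> carrier_vec n" and Hu: "H *\<^sub>v u = \<mu> \<cdot>\<^sub>v u" using u unfolding K_def by auto
    have "H *\<^sub>v (X ^\<^sub>m p *\<^sub>v u) = \<mu> \<cdot>\<^sub>v (X ^\<^sub>m p *\<^sub>v u)"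
      using H_eigenvector_X_pow[OF u1 Hu, of p] per unfolding \<mu>_def by simp
    thus ?thesis unfolding K_def using u1 Hu by (auto simp: vec_eq_iff algebra_simps pow_carrier_mat)
  qed
  have "X ^\<^sub>m j *\<^sub>v v0 \<in> K" "X ^\<^sub>m j *\<^sub>v v0 \<noteq> 0\<^sub>v n"
    using H_eigenvector_X_pow[OF v0(1) Hv0] X_pow_injective[OF nz v0] v0(1)
    unfolding K_def \<mu>_def by (auto simp: pow_carrier_mat)
  then obtain v a where v: "v \<in> K" "v \<noteq> 0\<^sub>v n" and Xv: "X ^\<^sub>m p *\<^sub>v v = a \<cdot>\<^sub>v v"
    using invariant_subspace_has_eigenvector[OF pow_carrier_mat[OF carrier(1)], of K] K
    unfolding K_def by blast
  have "a \<noteq> 0"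
  proof
    assume "a = 0"
    hence "X ^\<^sub>m p *\<^sub>v v = 0\<^sub>v n" using Xv v unfolding K_def by (auto simp: vec_eq_iff)
    thus False using X_pow_injective[OF nz, of v] v unfolding K_def by auto
  qed
  show thesis
    using that[of p \<mu> v a] p card_finite_spectrum(2)[OF carrier(3)] per dist v Xv \<open>a \<noteq> 0\<close>
    unfolding \<mu>_def K_def by auto
qed

end

section \<open>The modules A'(\<lambda>, z, a)\<close>

lemma tpow_carrier [simp]: "tpow p a i \<in> carrier_vec p" "dim_vec (tpow p a i) = p"
  unfolding tpow_def by simp_all

lemma tpow_of_nat: "j < p \<Longrightarrow> tpow p a (int j) = unit_vec p j"
  unfolding tpow_def by (intro eq_vecI) auto

lemma tpow_period: "0 < p \<Longrightarrow> tpow p a (int p) = a \<cdot>\<^sub>v unit_vec p 0"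
  unfolding tpow_def by simp

lemma tpow_minus_one: "0 < p \<Longrightarrow> tpow p a (- 1) = inverse a \<cdot>\<^sub>v unit_vec p (p - 1)"
proof -
  assume p: "0 < p"
  have "(- 1) div int p = - 1" "(- 1) mod int p = int p - 1"
    using p by (simp_all add: div_eq_minus1 zmod_minus1)
  thus ?thesis unfolding tpow_def using p by (simp add: nat_diff_distrib power_int_minus)
qed

lemma A'_carrier [simp]:
  "A'_X p a \<in> carrier_mat p p" "A'_Y lam z p a \<in> carrier_mat p p" "A'_H lam p a \<in> carrier_mat p p"
  unfolding A'_X_def A'_Y_def A'_H_def by auto

lemma A'_dims [simp]:
  "dim_row (A'_X p a) = p" "dim_col (A'_X p a) = p" "dim_row (A'_Y lam z p a) = p"
  "dim_col (A'_Y lam z p a) = p" "dim_row (A'_H lam p a) = p" "dim_col (A'_H lam p a) = p"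
  unfolding A'_X_def A'_Y_def A'_H_def by simp_all

lemma col_A'_X: "j < p \<Longrightarrow> col (A'_X p a) j = tpow p a (int j + 1)"
  unfolding A'_X_def by (intro eq_vecI) auto

lemma col_A'_Y: "j < p \<Longrightarrow> col (A'_Y lam z p a) j = (lam (int j) + z) \<cdot>\<^sub>v tpow p a (int j - 1)"
  unfolding A'_Y_def by (intro eq_vecI) auto

lemma col_A'_H: "j < p \<Longrightarrow> col (A'_H lam p a) j = lam (int j) \<cdot>\<^sub>v tpow p a (int j)"
  unfolding A'_H_def by (intro eq_vecI) auto

definition orbit_seq :: "complex poly \<Rightarrow> nat \<Rightarrow> complex \<Rightarrow> int \<Rightarrow> complex" where
  "orbit_seq f p \<mu> i = (poly f ^^ nat (i mod int p)) \<mu>"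

lemma orbit_seq_of_nat: "j < p \<Longrightarrow> orbit_seq f p \<mu> (int j) = (poly f ^^ j) \<mu>"
  unfolding orbit_seq_def by simp

lemma orbit_seq_in_S_f:
  assumes p: "0 < p" and per: "(poly f ^^ p) \<mu> = \<mu>"
  shows "orbit_seq f p \<mu> \<in> S_f f"
  unfolding S_f_def
proof (intro CollectI allI)
  fix i :: int
  define m where "m = nat (i mod int p)"
  have m: "i mod int p = int m" "m < p" unfolding m_def using p by (simp_all add: nat_less_iff)
  have "(i + 1) mod int p = (int m + 1) mod int p" using mod_add_left_eq[of i "int p" 1] m(1) by simp
  also have "\<dots> = (if Suc m < p then int (Suc m) else 0)"
  proof (cases "Suc m < p")
    case False
    hence "int m + 1 = int p" using m(2) by simp
    thus ?thesis using False by simp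
  qed simp
  finally have "nat ((i + 1) mod int p) = (if Suc m < p then Suc m else 0)"
    by (simp del: of_nat_Suc)
  moreover have "Suc m = p" if "\<not> Suc m < p" using that m(2) by simp
  ultimately show "poly f (orbit_seq f p \<mu> i) = orbit_seq f p \<mu> (i + 1)"
    using per unfolding orbit_seq_def m_def[symmetric] by auto
qed

lemma lam_period_eqI:
  assumes "{m. \<forall>i. lam (i + m) = lam i} = range (\<lambda>k. k * int p)"
  shows "lam_period lam = p"
  unfolding lam_period_def assms
proof (rule the_equality)
  fix g :: nat assume g: "range (\<lambda>k. k * int p) = range (\<lambda>k. k * int g)"
  have "int p \<in> range (\<lambda>k. k * int p)" "int g \<in> range (\<lambda>k. k * int g)"
    by (rule range_eqI[where x = 1], simp)+
  hence "int p \<in> range (\<lambda>k. k * int g)" "int g \<in> range (\<lambda>k. k * int p)" using g by simp_all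
  hence "int g dvd int p" "int p dvd int g" by (auto simp: dvd_def mult.commute)
  thus "g = p" by (simp add: dvd_antisym)
qed simp

lemma lam_period_orbit_seq:
  assumes p: "0 < p"
    and dist: "\<And>i j. i < j \<Longrightarrow> j < p \<Longrightarrow> (poly f ^^ i) \<mu> \<noteq> (poly f ^^ j) \<mu>"
  shows "lam_period (orbit_seq f p \<mu>) = p"
proof (rule lam_period_eqI, intro equalityI subsetI)
  fix m assume "m \<in> {m. \<forall>i. orbit_seq f p \<mu> (i + m) = orbit_seq f p \<mu> i}"
  hence "orbit_seq f p \<mu> (0 + m) = orbit_seq f p \<mu> 0" by blast
  hence "(poly f ^^ 0) \<mu> = (poly f ^^ nat (m mod int p)) \<mu>" by (simp add: orbit_seq_def)
  moreover have "nat (m mod int p) < p" using p by (simp add: nat_less_iff)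
  ultimately have "nat (m mod int p) = 0"
    using dist[of 0 "nat (m mod int p)"] by (cases "nat (m mod int p)") auto
  moreover have "0 \<le> m mod int p" using p by simp
  ultimately have "int p dvd m" by (simp add: dvd_eq_mod_eq_0)
  thus "m \<in> range (\<lambda>k. k * int p)" by (auto simp: dvd_def mult.commute)
next
  fix m assume "m \<in> range (\<lambda>k. k * int p)"
  then obtain k where "m = k * int p" by blast
  thus "m \<in> {m. \<forall>i. orbit_seq f p \<mu> (i + m) = orbit_seq f p \<mu> i}"
    by (simp add: orbit_seq_def)
qed

locale periodic_eigenvector = simple_Hf_module +
  fixes \<mu> :: complex and p :: nat and v :: "complex vec" and a :: complex
  assumes p_pos: "0 < p" and p_le: "p \<le> n" and periodic: "(poly f ^^ p) \<mu> = \<mu>"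
    and v: "v \<in> carrier_vec n" "v \<noteq> 0\<^sub>v n" and H_v: "H *\<^sub>v v = \<mu> \<cdot>\<^sub>v v"
    and X_pow_v: "X ^\<^sub>m p *\<^sub>v v = a \<cdot>\<^sub>v v" and a: "a \<noteq> 0"
begin

abbreviation lam :: "int \<Rightarrow> complex" where "lam \<equiv> orbit_seq f p \<mu>"

text \<open>Q maps t^i to X^i v; its inverse is the isomorphism onto A'(\<lambda>, z, a).\<close>
definition Q :: "complex mat" where "Q = mat n p (\<lambda>(r, i). (X ^\<^sub>m i *\<^sub>v v) $ r)"

lemma Q_carrier [simp]: "Q \<in> carrier_mat n p" "dim_row Q = n" "dim_col Q = p"
  unfolding Q_def by simp_all

lemma col_Q: "i < p \<Longrightarrow> col Q i = X ^\<^sub>m i *\<^sub>v v"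
  using v unfolding Q_def by (intro eq_vecI) (auto simp: pow_carrier_mat)

lemma Q_unit_vec: "i < p \<Longrightarrow> Q *\<^sub>v unit_vec p i = X ^\<^sub>m i *\<^sub>v v"
  by (simp add: mult_unit_vec_eq_col[OF Q_carrier(1)] col_Q)

lemma Q_smult_unit_vec: "i < p \<Longrightarrow> Q *\<^sub>v (c \<cdot>\<^sub>v unit_vec p i) = c \<cdot>\<^sub>v (X ^\<^sub>m i *\<^sub>v v)"
  using Q_unit_vec mult_mat_vec[OF Q_carrier(1) unit_vec_carrier] by simp

lemma H_X_pow_v: "H *\<^sub>v (X ^\<^sub>m j *\<^sub>v v) = (poly f ^^ j) \<mu> \<cdot>\<^sub>v (X ^\<^sub>m j *\<^sub>v v)"
  by (rule H_eigenvector_X_pow[OF v(1) H_v])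

lemma Y_X_pow_v: "Y *\<^sub>v (X ^\<^sub>m Suc j *\<^sub>v v) = ((poly f ^^ Suc j) \<mu> + z) \<cdot>\<^sub>v (X ^\<^sub>m j *\<^sub>v v)"
proof -
  have u: "X ^\<^sub>m j *\<^sub>v v \<in> carrier_vec n" using v by (simp add: pow_carrier_mat)
  have "Y *\<^sub>v (X ^\<^sub>m Suc j *\<^sub>v v) = F *\<^sub>v (X ^\<^sub>m j *\<^sub>v v) + z \<cdot>\<^sub>v (X ^\<^sub>m j *\<^sub>v v)"
    by (simp only: pow_mat_Suc_mult_vec[OF carrier(1) v(1)] Y_X[OF u])
  also have "F *\<^sub>v (X ^\<^sub>m j *\<^sub>v v) = (poly f ^^ Suc j) \<mu> \<cdot>\<^sub>v (X ^\<^sub>m j *\<^sub>v v)"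
    using poly_mat_eigenvector[OF carrier(3) u H_X_pow_v] by simp
  finally show ?thesis using u by (simp add: add_smult_distrib_vec)
qed

lemma X_Q: "X * Q = Q * A'_X p a"
proof (rule mat_col_eqI)
  fix j assume "j < dim_col (Q * A'_X p a)"
  hence j: "j < p" by simp
  have "col (X * Q) j = X ^\<^sub>m Suc j *\<^sub>v v"
    using col_mult2[OF carrier(1) Q_carrier(1) j] col_Q[OF j] pow_mat_Suc_mult_vec[OF carrier(1) v(1)] by simp
  also have "\<dots> = Q *\<^sub>v tpow p a (int j + 1)"
  proof (cases "Suc j < p")
    case True
    thus ?thesis using tpow_of_nat[OF True, of a] Q_unit_vec[OF True] by (simp add: add.commute)
  next
    case False
    hence "Suc j = p" "int j + 1 = int p" using j by simp_all
    hence "X ^\<^sub>m Suc j *\<^sub>v v = a \<cdot>\<^sub>v v" using X_pow_v by (simp only:)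
    thus ?thesis using tpow_period[OF p_pos] Q_smult_unit_vec[OF p_pos, of a] v \<open>int j + 1 = int p\<close> by simp
  qed
  also have "\<dots> = col (Q * A'_X p a) j" using col_mult2[OF Q_carrier(1) _ j] col_A'_X[OF j] by simp
  finally show "col (X * Q) j = col (Q * A'_X p a) j" .
qed simp_all

lemma H_Q: "H * Q = Q * A'_H lam p a"
proof (rule mat_col_eqI)
  fix j assume "j < dim_col (Q * A'_H lam p a)"
  hence j: "j < p" by simp
  have "col (H * Q) j = lam (int j) \<cdot>\<^sub>v (X ^\<^sub>m j *\<^sub>v v)"
    using col_mult2[OF carrier(3) Q_carrier(1) j] col_Q[OF j] H_X_pow_v orbit_seq_of_nat[OF j] by simp
  also have "\<dots> = col (Q * A'_H lam p a) j"
    using col_mult2[OF Q_carrier(1) _ j] col_A'_H[OF j] tpow_of_nat[OF j] Q_smult_unit_vec[OF j] by simp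
  finally show "col (H * Q) j = col (Q * A'_H lam p a) j" .
qed simp_all

lemma Y_Q: "Y * Q = Q * A'_Y lam z p a"
proof (rule mat_col_eqI)
  fix j assume "j < dim_col (Q * A'_Y lam z p a)"
  hence j: "j < p" by simp
  have "Y *\<^sub>v (X ^\<^sub>m j *\<^sub>v v) = (lam (int j) + z) \<cdot>\<^sub>v (Q *\<^sub>v tpow p a (int j - 1))"
  proof (cases j)
    case 0
    have pp: "Suc (p - 1) = p" using p_pos by simp
    have "Y *\<^sub>v v = Y *\<^sub>v (inverse a \<cdot>\<^sub>v (X ^\<^sub>m p *\<^sub>v v))"
      using X_pow_v a v by (simp add: smult_smult_assoc)
    also have "\<dots> = inverse a \<cdot>\<^sub>v (((poly f ^^ p) \<mu> + z) \<cdot>\<^sub>v (X ^\<^sub>m (p - 1) *\<^sub>v v))"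
      using Y_X_pow_v[of "p - 1", unfolded pp] v by (simp add: pow_carrier_mat del: pow_mat.simps)
    finally have "Y *\<^sub>v v = inverse a \<cdot>\<^sub>v (((poly f ^^ p) \<mu> + z) \<cdot>\<^sub>v (X ^\<^sub>m (p - 1) *\<^sub>v v))" .
    thus ?thesis
      using 0 periodic tpow_minus_one[OF p_pos] Q_smult_unit_vec[of "p - 1" "inverse a"] p_pos v
        orbit_seq_of_nat[OF p_pos]
      by (simp add: smult_smult_assoc mult.commute pow_carrier_mat)
  next
    case (Suc i)
    thus ?thesis
      using Y_X_pow_v[of i] tpow_of_nat[of i p a] Q_unit_vec[of i] orbit_seq_of_nat[OF j] j by simp
  qed
  also have "\<dots> = col (Q * A'_Y lam z p a) j"
    using col_mult2[OF Q_carrier(1) _ j] col_A'_Y[OF j] mult_mat_vec[OF Q_carrier(1) tpow_carrier(1)] by simp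
  finally show "col (Y * Q) j = col (Q * A'_Y lam z p a) j"
    using col_mult2[OF carrier(2) Q_carrier(1) j] col_Q[OF j] by simp
qed simp_all

lemma Q_right_inverse: "\<exists>R \<in> carrier_mat p n. Q * R = 1\<^sub>m n"
proof (rule surj_mat_right_inverse[OF Q_carrier(1)])
  have "Hf_submodule n X Y H {Q *\<^sub>v w | w. w \<in> carrier_vec p}"
  proof (rule Hf_submodule_image[OF Q_carrier(1)])
    fix w :: "complex vec" assume w: "w \<in> carrier_vec p"
    show "\<exists>w' \<in> carrier_vec p. X *\<^sub>v (Q *\<^sub>v w) = Q *\<^sub>v w'"
      using mult_vec_intertwine[OF carrier(1) _ Q_carrier(1) X_Q w] mult_mat_vec_carrier[OF A'_carrier(1) w]
      by (intro bexI[of _ "A'_X p a *\<^sub>v w"]) simp_all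
    show "\<exists>w' \<in> carrier_vec p. Y *\<^sub>v (Q *\<^sub>v w) = Q *\<^sub>v w'"
      using mult_vec_intertwine[OF carrier(2) _ Q_carrier(1) Y_Q w] mult_mat_vec_carrier[OF A'_carrier(2) w]
      by (intro bexI[of _ "A'_Y lam z p a *\<^sub>v w"]) simp_all
    show "\<exists>w' \<in> carrier_vec p. H *\<^sub>v (Q *\<^sub>v w) = Q *\<^sub>v w'"
      using mult_vec_intertwine[OF carrier(3) _ Q_carrier(1) H_Q w] mult_mat_vec_carrier[OF A'_carrier(3) w]
      by (intro bexI[of _ "A'_H lam p a *\<^sub>v w"]) simp_all
  qed
  moreover have "v \<in> {Q *\<^sub>v w | w. w \<in> carrier_vec p}"
    using Q_unit_vec[OF p_pos] v by (auto intro!: exI[of _ "unit_vec p 0"])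
  ultimately have surj: "{Q *\<^sub>v w | w. w \<in> carrier_vec p} = carrier_vec n"
    using v submodule_eq_carrier by blast
  fix u :: "complex vec" assume "u \<in> carrier_vec n"
  hence "u \<in> {Q *\<^sub>v w | w. w \<in> carrier_vec p}" using surj by simp
  thus "\<exists>w \<in> carrier_vec p. Q *\<^sub>v w = u" by blast
qed

lemma period_eq_dim: "p = n"
  using Q_right_inverse mat_right_inverse_dim_le[OF Q_carrier(1)] p_le by (metis le_antisym)

lemma Hf_iso_A': "Hf_iso n X Y H (A'_X n a) (A'_Y lam z n a) (A'_H lam n a)"
proof -
  have Q: "Q \<in> carrier_mat n n" using Q_carrier(1) period_eq_dim by metis
  obtain R where R: "R \<in> carrier_mat n n" and QR: "Q * R = 1\<^sub>m n"
    using Q_right_inverse period_eq_dim by auto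
  have RQ: "R * Q = 1\<^sub>m n" by (rule mat_mult_left_right_inverse[OF Q R QR])
  show ?thesis unfolding Hf_iso_def
  proof (intro bexI[OF _ R] conjI)
    show "invertible_mat R"
      unfolding invertible_mat_def inverts_mat_def using R Q QR RQ by auto
    show "R * X = A'_X n a * R" "R * Y = A'_Y lam z n a * R" "R * H = A'_H lam n a * R"
      using intertwine_inverse[OF _ _ Q R QR RQ] X_Q Y_Q H_Q period_eq_dim by auto
  qed
qed

end

theorem lemma9:
  fixes f :: "complex poly" and n :: nat and X Y H :: "complex mat"
  assumes "Hf_simple f n X Y H"
    and "X ^\<^sub>m n \<noteq> 0\<^sub>m n n"
  shows "\<exists>zd a lam. a \<noteq> 0 \<and> lam \<in> S_f f \<and> lam_period lam = n \<and>
           Hf_iso n X Y H (A'_X n a) (A'_Y lam zd n a) (A'_H lam n a)"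
proof -
  interpret simple_Hf_module f n X Y H by unfold_locales (fact assms(1))
  obtain \<mu> p v a where p: "0 < p" "p \<le> n" and per: "(poly f ^^ p) \<mu> = \<mu>"
    and dist: "\<And>i j. i < j \<Longrightarrow> j < p \<Longrightarrow> (poly f ^^ i) \<mu> \<noteq> (poly f ^^ j) \<mu>"
    and v: "v \<in> carrier_vec n" "v \<noteq> 0\<^sub>v n" "H *\<^sub>v v = \<mu> \<cdot>\<^sub>v v"
    and X_pow_v: "X ^\<^sub>m p *\<^sub>v v = a \<cdot>\<^sub>v v" and a: "a \<noteq> 0"
    using periodic_eigenpair[OF assms(2)] by metis
  interpret periodic_eigenvector f n X Y H \<mu> p v a
    by unfold_locales (use p per v X_pow_v a in auto)
  show ?thesis
    using Hf_iso_A' orbit_seq_in_S_f[OF p(1) per] lam_period_orbit_seq[OF p(1) dist] a period_eq_dim by auto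
qed

end
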